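(* Let $\Sigma$ be a set containing $0$, $(\Gamma,\oplus)$ an abelian group, $n\ge1$, and $K=\{K_1,\ldots,K_k\}$ a partition of $[n]$ into nonempty sets. A function $f:\Sigma^n\to\Gamma$ has $K$-separable arguments if and only if for all $i',i''\in[n]$ lying in different blocks of $K$, all $\bar x\in\Sigma^n$ and all $a',a''\in\Sigma$, $$f(\bar x)\ominus f(\bar x^{[i']}[a'])\ominus f(\bar x^{[i'']}[a''])\oplus f(\bar x^{[i',i'']}[a',a''])=0.$$
   Context: $[n]=\{1,\ldots,n\}$. For $\bar x=(x_1,\ldots,x_n)$, $\bar x^{[i]}[y]$ is $\bar x$ with its $i$th coordinate replaced by $y$, and $\bar x^{[i',i'']}[a',a'']$ is $\bar x$ with coordinates $i',i''$ replaced by $a',a''$. For $L=\{i_1<\cdots<i_m\}\subseteq[n]$, $\bar x_L=(x_{i_1},\ldots,x_{i_m})$. A function $f:\Sigma^n\to\Gamma$ has $K$-separable arguments (for a partition $K=\{K_1,\ldots,K_k\}$ of $[n]$) if there exist functions $f_j:\Sigma^{|K_j|}\to\Gamma$ with $f(\bar x)=f_1(\bar x_{K_1})\oplus\cdots\oplus f_k(\bar x_{K_k})$ for all $\bar x$. *)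

theory Defs
  imports Main "HOL-Library.Disjoint_Sets"
begin

text \<open>Elements of \<Sigma>^n are lists of length n over S; coordinate i (1-based) of xs is xs ! (i - 1).\<close>

definition tuples :: "'a set \<Rightarrow> nat \<Rightarrow> 'a list set" where
  "tuples S n = {xs. length xs = n \<and> set xs \<subseteq> S}"

definition upd1 :: "'a list \<Rightarrow> nat \<Rightarrow> 'a \<Rightarrow> 'a list" where
  "upd1 xs i y = xs[i - 1 := y]"

definition restr :: "'a list \<Rightarrow> nat set \<Rightarrow> 'a list" where
  "restr xs L = nths xs {j. Suc j \<in> L}"

definition separable_args ::
  "'a set \<Rightarrow> nat \<Rightarrow> nat set set \<Rightarrow> ('a list \<Rightarrow> 'b::ab_group_add) \<Rightarrow> bool" where
  "separable_args S n K f \<longleftrightarrow>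
     (\<exists>g :: nat set \<Rightarrow> 'a list \<Rightarrow> 'b.
        (\<forall>xs\<in>tuples S n. f xs = (\<Sum>B\<in>K. g B (restr xs B))))"

end

theory Submission
  imports Defs
begin

text \<open>Each summand of a separable f ignores one of two coordinates from different
  blocks, so its mixed difference vanishes. Conversely, pasting commuting squares
  propagates the vanishing of mixed differences from single coordinates to simultaneous
  updates of whole sets of coordinates lying in different blocks. Telescoping from the
  base point (z, ..., z) then writes f x as f (z, ..., z) plus, for every block B, the
  increment of f when the coordinates in B are changed to those of x; this increment
  depends only on the restriction of x to B.\<close>

lemma nths_conv_map_filter:
  "nths xs A = map ((!) xs) (filter (\<lambda>i. i \<in> A) [0..<length xs])"
  by (induction xs rule: rev_induct) (auto simp: nths_append nth_append intro!: map_cong)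

lemma restr_eq_iff:
  assumes "length xs = length ys"
  shows "restr xs B = restr ys B \<longleftrightarrow> (\<forall>j < length xs. Suc j \<in> B \<longrightarrow> xs ! j = ys ! j)"
  using assms by (auto simp: restr_def nths_conv_map_filter)

(* The hypothesis 0 < i matters: by truncated subtraction upd1 xs 0 = upd1 xs 1. *)
lemma restr_upd1_notin: "0 < i \<Longrightarrow> i \<notin> B \<Longrightarrow> restr (upd1 xs i a) B = restr xs B"
  by (subst restr_eq_iff) (auto simp: upd1_def, metis Suc_pred nth_list_update_neq)

lemma upd1_commute:
  "0 < i \<Longrightarrow> 0 < j \<Longrightarrow> i \<noteq> j \<Longrightarrow> upd1 (upd1 xs i a) j b = upd1 (upd1 xs j b) i a"
  by (simp add: upd1_def list_update_swap)

lemma length_upd1 [simp]: "length (upd1 xs i a) = length xs"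
  by (simp add: upd1_def)

lemma upd1_in_tuples: "xs \<in> tuples S n \<Longrightarrow> a \<in> S \<Longrightarrow> upd1 xs i a \<in> tuples S n"
  by (auto simp: tuples_def upd1_def dest: set_update_subset_insert[THEN subsetD])

definition mixed_diff ::
  "('a list \<Rightarrow> 'b::ab_group_add) \<Rightarrow> 'a list \<Rightarrow> nat \<Rightarrow> 'a \<Rightarrow> nat \<Rightarrow> 'a \<Rightarrow> 'b" where
  "mixed_diff f xs i a j b =
     f xs - f (upd1 xs i a) - f (upd1 xs j b) + f (upd1 (upd1 xs i a) j b)"

lemma mixed_diff_sum:
  "mixed_diff (\<lambda>xs. \<Sum>B\<in>K. h B xs) xs i a j b = (\<Sum>B\<in>K. mixed_diff (h B) xs i a j b)"
  by (simp add: mixed_diff_def sum.distrib sum_subtractf)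

lemma mixed_diff_cong:
  assumes "\<And>ys. ys \<in> tuples S n \<Longrightarrow> f ys = g ys" "xs \<in> tuples S n" "a \<in> S" "b \<in> S"
  shows "mixed_diff f xs i a j b = mixed_diff g xs i a j b"
  using assms by (simp add: mixed_diff_def upd1_in_tuples)

lemma mixed_diff_restr_eq_0:
  assumes "0 < i" "0 < j" "i \<noteq> j" "i \<notin> B \<or> j \<notin> B"
  shows "mixed_diff (\<lambda>xs. h (restr xs B)) xs i a j b = 0"
  using assms(4)
proof
  assume "i \<notin> B"
  then show ?thesis
    using assms(1-3) by (simp add: mixed_diff_def upd1_commute[of i j] restr_upd1_notin)
next
  assume "j \<notin> B"
  then show ?thesis
    using assms(2) by (simp add: mixed_diff_def restr_upd1_notin)
qed

lemma mixed_diff_eq_0_if_separable_args: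
  assumes "separable_args S n K f" "partition_on {1..n} K"
    and "B' \<in> K" "B'' \<in> K" "B' \<noteq> B''" "i' \<in> B'" "i'' \<in> B''"
    and "xs \<in> tuples S n" "a' \<in> S" "a'' \<in> S"
  shows "mixed_diff f xs i' a' i'' a'' = 0"
proof -
  obtain g where g: "\<And>ys. ys \<in> tuples S n \<Longrightarrow> f ys = (\<Sum>B\<in>K. g B (restr ys B))"
    using assms(1) unfolding separable_args_def by blast
  have "disjoint K" "\<Union>K = {1..n}"
    using assms(2) by (simp_all add: partition_on_def)
  then have "i' \<notin> B \<or> i'' \<notin> B" if "B \<in> K" for B
    using assms(3-7) that by (auto dest: disjointD)
  moreover have "i' \<noteq> i''"
    using \<open>disjoint K\<close> assms(3-7) by (auto dest: disjointD)
  moreover have "{i', i''} \<subseteq> {1..n}"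
    using \<open>\<Union>K = {1..n}\<close> assms(3,4,6,7) by blast
  then have "0 < i'" "0 < i''"
    by auto
  ultimately show ?thesis
    using assms(8-10)
    by (simp add: mixed_diff_cong[OF g] mixed_diff_sum mixed_diff_restr_eq_0)
qed

definition override_list :: "nat set \<Rightarrow> 'a list \<Rightarrow> 'a list \<Rightarrow> 'a list" where
  "override_list C xs ys = map (\<lambda>j. if Suc j \<in> C then ys ! j else xs ! j) [0..<length xs]"

lemma length_override_list [simp]: "length (override_list C xs ys) = length xs"
  by (simp add: override_list_def)

lemma nth_override_list [simp]:
  "j < length xs \<Longrightarrow> override_list C xs ys ! j = (if Suc j \<in> C then ys ! j else xs ! j)"
  by (simp add: override_list_def)

lemma override_list_in_tuples:
  "xs \<in> tuples S n \<Longrightarrow> ys \<in> tuples S n \<Longrightarrow> override_list C xs ys \<in> tuples S n"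
  by (auto simp: tuples_def override_list_def dest: nth_mem)

lemma override_list_empty [simp]: "override_list {} xs ys = xs"
  by (rule nth_equalityI) auto

lemma override_list_override_list_same:
  "override_list D (override_list C xs ys) ys = override_list (C \<union> D) xs ys"
  by (rule nth_equalityI) auto

lemma override_list_commute:
  "C \<inter> D = {} \<Longrightarrow>
    override_list D (override_list C xs ys) zs = override_list C (override_list D xs zs) ys"
  by (rule nth_equalityI) auto

lemma override_list_all:
  "length ys = length xs \<Longrightarrow> override_list {1..length xs} xs ys = ys"
  by (rule nth_equalityI) auto

lemma override_list_singleton:
  "0 < i \<Longrightarrow> i \<le> length xs \<Longrightarrow> override_list {i} xs ys = upd1 xs i (ys ! (i - 1))"
  by (rule nth_equalityI) (auto simp: upd1_def nth_list_update)

lemma override_list_cong_restr: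
  "length ys = length xs \<Longrightarrow> length ys' = length xs \<Longrightarrow> restr ys B = restr ys' B \<Longrightarrow>
    override_list B xs ys = override_list B xs ys'"
  by (rule nth_equalityI) (auto simp: restr_eq_iff)

definition no_interaction ::
  "'a set \<Rightarrow> nat \<Rightarrow> ('a list \<Rightarrow> 'b::ab_group_add) \<Rightarrow> nat set \<Rightarrow> nat set \<Rightarrow> bool" where
  "no_interaction S n f C D \<longleftrightarrow>
     (\<forall>xs\<in>tuples S n. \<forall>ys\<in>tuples S n. \<forall>zs\<in>tuples S n.
        f xs - f (override_list C xs ys) - f (override_list D xs zs)
          + f (override_list D (override_list C xs ys) zs) = 0)"

lemma no_interaction_empty: "no_interaction S n f {} D"
  by (simp add: no_interaction_def)

lemma no_interaction_Un:
  assumes C: "no_interaction S n f C D" and C': "no_interaction S n f C' D"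
  shows "no_interaction S n f (C \<union> C') D"
  unfolding no_interaction_def
proof (intro ballI)
  fix xs ys zs assume tuples: "xs \<in> tuples S n" "ys \<in> tuples S n" "zs \<in> tuples S n"
  define xs' where "xs' = override_list C xs ys"
  have "xs' \<in> tuples S n"
    using tuples by (simp add: xs'_def override_list_in_tuples)
  then have E': "f xs' - f (override_list C' xs' ys) - f (override_list D xs' zs)
      + f (override_list D (override_list C' xs' ys) zs) = 0" (is "?b - ?e - ?d + ?g = 0")
    using C' tuples by (simp add: no_interaction_def)
  have E: "f xs - f xs' - f (override_list D xs zs) + f (override_list D xs' zs) = 0"
    (is "?a - _ - ?c + _ = 0")
    using C tuples by (simp add: no_interaction_def xs'_def)
  have "?a - ?e - ?c + ?g = (?a - ?b - ?c + ?d) + (?b - ?e - ?d + ?g)"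
    by (simp add: algebra_simps)
  then have "?a - ?e - ?c + ?g = 0"
    using E E' by simp
  then show "f xs - f (override_list (C \<union> C') xs ys) - f (override_list D xs zs)
      + f (override_list D (override_list (C \<union> C') xs ys) zs) = 0"
    by (simp add: xs'_def override_list_override_list_same)
qed

lemma no_interaction_UN:
  "finite I \<Longrightarrow> (\<And>i. i \<in> I \<Longrightarrow> no_interaction S n f (C i) D) \<Longrightarrow>
    no_interaction S n f (\<Union>i\<in>I. C i) D"
  by (induction I rule: finite_induct) (simp_all add: no_interaction_empty no_interaction_Un)

lemma no_interaction_commute:
  assumes "C \<inter> D = {}" "no_interaction S n f C D"
  shows "no_interaction S n f D C"
  unfolding no_interaction_def
proof (intro ballI)
  fix xs ys zs assume "xs \<in> tuples S n" "ys \<in> tuples S n" "zs \<in> tuples S n"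
  then have "f xs - f (override_list C xs zs) - f (override_list D xs ys)
      + f (override_list D (override_list C xs zs) ys) = 0"
    using assms(2) by (simp add: no_interaction_def)
  then show "f xs - f (override_list D xs ys) - f (override_list C xs zs)
      + f (override_list C (override_list D xs ys) zs) = 0"
    using assms(1) by (simp add: override_list_commute[OF assms(1)] algebra_simps)
qed

lemma no_interaction_of_coordinates:
  assumes "finite C" "finite D" "C \<inter> D = {}"
    and "\<And>i j. i \<in> C \<Longrightarrow> j \<in> D \<Longrightarrow> no_interaction S n f {i} {j}"
  shows "no_interaction S n f C D"
proof -
  have "no_interaction S n f {i} D" if "i \<in> C" for i
  proof -
    have "no_interaction S n f {j} {i}" if "j \<in> D" for j
      using assms \<open>i \<in> C\<close> that by (intro no_interaction_commute[of "{i}"]) auto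
    then have "no_interaction S n f (\<Union>j\<in>D. {j}) {i}"
      using assms(2) by (intro no_interaction_UN)
    then show ?thesis
      using assms(3) that by (intro no_interaction_commute[of D]) auto
  qed
  then have "no_interaction S n f (\<Union>i\<in>C. {i}) D"
    using assms(1) by (intro no_interaction_UN)
  then show ?thesis
    by simp
qed

lemma no_interaction_singletonI:
  assumes "i \<in> {1..n}" "j \<in> {1..n}"
    and "\<And>xs a b. xs \<in> tuples S n \<Longrightarrow> a \<in> S \<Longrightarrow> b \<in> S \<Longrightarrow> mixed_diff f xs i a j b = 0"
  shows "no_interaction S n f {i} {j}"
  unfolding no_interaction_def
proof (intro ballI)
  fix xs ys zs assume tuples: "xs \<in> tuples S n" "ys \<in> tuples S n" "zs \<in> tuples S n"
  then have "ys ! (i - 1) \<in> S" "zs ! (j - 1) \<in> S"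
    using assms(1,2) by (auto simp: tuples_def)
  then show "f xs - f (override_list {i} xs ys) - f (override_list {j} xs zs)
      + f (override_list {j} (override_list {i} xs ys) zs) = 0"
    using assms tuples by (simp add: override_list_singleton tuples_def mixed_diff_def)
qed

lemma override_list_Union_increment_eq_sum:
  assumes "finite M" "\<And>B B'. B \<in> M \<Longrightarrow> B' \<in> M \<Longrightarrow> B \<noteq> B' \<Longrightarrow> no_interaction S n f B B'"
    and "xs \<in> tuples S n" "ys \<in> tuples S n"
  shows "f (override_list (\<Union>M) xs ys) - f xs = (\<Sum>B\<in>M. f (override_list B xs ys) - f xs)"
  using assms(1,2)
proof (induction M rule: finite_induct)
  case empty
  then show ?case by simp
next
  case (insert B M)
  have "no_interaction S n f (\<Union>B'\<in>M. B') B"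
    using insert by (intro no_interaction_UN) auto
  then have "f xs - f (override_list (\<Union>M) xs ys) - f (override_list B xs ys)
      + f (override_list B (override_list (\<Union>M) xs ys) ys) = 0"
    using assms(3,4) unfolding no_interaction_def by simp
  then have "f xs - f (override_list (\<Union>M) xs ys) - f (override_list B xs ys)
      + f (override_list (\<Union>(insert B M)) xs ys) = 0"
    by (simp add: override_list_override_list_same Un_commute)
  moreover have "f (override_list (\<Union>M) xs ys) - f xs = (\<Sum>B\<in>M. f (override_list B xs ys) - f xs)"
    using insert by simp
  ultimately show ?case
    using insert(1,2) by (simp add: algebra_simps)
qed

lemma separable_argsI:
  assumes "finite K" "K \<noteq> {}"
    and "\<And>xs. xs \<in> tuples S n \<Longrightarrow> f xs = c + (\<Sum>B\<in>K. h B xs)"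
    and "\<And>B xs ys. B \<in> K \<Longrightarrow> xs \<in> tuples S n \<Longrightarrow> ys \<in> tuples S n \<Longrightarrow>
      restr xs B = restr ys B \<Longrightarrow> h B xs = h B ys"
  shows "separable_args S n K f"
proof -
  obtain B0 where "B0 \<in> K"
    using assms(2) by blast
  define g where
    "g B r = (if B = B0 then c else 0) + h B (SOME ys. ys \<in> tuples S n \<and> restr ys B = r)" for B r
  have "f xs = (\<Sum>B\<in>K. g B (restr xs B))" if xs: "xs \<in> tuples S n" for xs
  proof -
    have h_some: "h B (SOME ys. ys \<in> tuples S n \<and> restr ys B = restr xs B) = h B xs"
      if "B \<in> K" for B
    proof -
      have "(SOME ys. ys \<in> tuples S n \<and> restr ys B = restr xs B) \<in> tuples S n \<and>
          restr (SOME ys. ys \<in> tuples S n \<and> restr ys B = restr xs B) B = restr xs B"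
        by (rule someI[of _ xs]) (simp add: xs)
      then show ?thesis
        using assms(4)[OF that] xs by blast
    qed
    have "(\<Sum>B\<in>K. g B (restr xs B)) = (\<Sum>B\<in>K. if B = B0 then c else 0) + (\<Sum>B\<in>K. h B xs)"
      by (simp add: g_def h_some sum.distrib)
    also have "\<dots> = f xs"
      using assms(1) \<open>B0 \<in> K\<close> assms(3)[OF xs] by simp
    finally show ?thesis ..
  qed
  then show ?thesis
    unfolding separable_args_def by blast
qed

lemma no_interaction_if_mixed_diff_eq_0:
  assumes "partition_on {1..n} K" "B \<in> K" "B' \<in> K" "B \<noteq> B'"
    and "\<And>i j xs a b. i \<in> B \<Longrightarrow> j \<in> B' \<Longrightarrow> xs \<in> tuples S n \<Longrightarrow> a \<in> S \<Longrightarrow> b \<in> S \<Longrightarrow>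
      mixed_diff f xs i a j b = 0"
  shows "no_interaction S n f B B'"
proof (rule no_interaction_of_coordinates)
  have sub: "B \<subseteq> {1..n}" "B' \<subseteq> {1..n}"
    using assms(1-3) by (auto simp: partition_on_def)
  then show "finite B" "finite B'"
    by (auto intro: finite_subset)
  show "no_interaction S n f {i} {j}" if "i \<in> B" "j \<in> B'" for i j
    using sub that assms(5) by (intro no_interaction_singletonI) auto
  show "B \<inter> B' = {}"
    using assms(1-4) by (auto simp: partition_on_def dest: disjointD)
qed

lemma separable_args_if_mixed_diff_eq_0:
  assumes "z \<in> S" "n \<ge> 1" "partition_on {1..n} K"
    and "\<And>B B' i j xs a b. B \<in> K \<Longrightarrow> B' \<in> K \<Longrightarrow> B \<noteq> B' \<Longrightarrow> i \<in> B \<Longrightarrow> j \<in> B' \<Longrightarrow>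
      xs \<in> tuples S n \<Longrightarrow> a \<in> S \<Longrightarrow> b \<in> S \<Longrightarrow> mixed_diff f xs i a j b = 0"
  shows "separable_args S n K f"
proof -
  define zs where "zs = replicate n z"
  have zs: "zs \<in> tuples S n"
    using assms(1) by (simp add: zs_def tuples_def set_replicate_conv_if)
  have UK: "\<Union>K = {1..n}"
    using assms(3) by (simp add: partition_on_def)
  have no_interaction: "no_interaction S n f B B'" if "B \<in> K" "B' \<in> K" "B \<noteq> B'" for B B'
    by (rule no_interaction_if_mixed_diff_eq_0[OF assms(3) that]) (use assms(4) that in blast)
  show ?thesis
  proof (rule separable_argsI[where c = "f zs" and h = "\<lambda>B xs. f (override_list B zs xs) - f zs"])
    show "finite K" "K \<noteq> {}"
      using UK assms(2) by (auto intro: finite_UnionD)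
  next
    fix xs assume xs: "xs \<in> tuples S n"
    have "f (override_list (\<Union>K) zs xs) = f xs"
      using UK xs zs override_list_all[of xs zs] by (simp add: tuples_def)
    moreover have "finite K"
      using UK by (auto intro: finite_UnionD)
    ultimately show "f xs = f zs + (\<Sum>B\<in>K. f (override_list B zs xs) - f zs)"
      using override_list_Union_increment_eq_sum[of K S n f zs xs] xs zs no_interaction
      by (simp add: diff_eq_eq add.commute)
  next
    fix B xs ys assume "xs \<in> tuples S n" "ys \<in> tuples S n" "restr xs B = restr ys B"
    then have "override_list B zs xs = override_list B zs ys"
      using zs by (intro override_list_cong_restr) (auto simp: tuples_def)
    then show "f (override_list B zs xs) - f zs = f (override_list B zs ys) - f zs"
      by simp
  qed
qed

theorem lemmaA1:
  fixes S :: "'a set" and z :: 'a and n :: nat and K :: "nat set set"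
    and f :: "'a list \<Rightarrow> 'b::ab_group_add"
  assumes "z \<in> S"
    and "n \<ge> 1"
    and "partition_on {1..n} K"
  shows "separable_args S n K f \<longleftrightarrow>
    (\<forall>i' i'' B' B''. B' \<in> K \<longrightarrow> B'' \<in> K \<longrightarrow> B' \<noteq> B'' \<longrightarrow> i' \<in> B' \<longrightarrow> i'' \<in> B'' \<longrightarrow>
      (\<forall>xs\<in>tuples S n. \<forall>a'\<in>S. \<forall>a''\<in>S.
        f xs - f (upd1 xs i' a') - f (upd1 xs i'' a'') + f (upd1 (upd1 xs i' a') i'' a'') = 0))"
    (is "_ \<longleftrightarrow> ?mixed_diffs_vanish")
proof
  assume "separable_args S n K f"
  then show ?mixed_diffs_vanish
    using assms(3) unfolding mixed_diff_def[symmetric]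
    by (blast intro: mixed_diff_eq_0_if_separable_args)
next
  assume ?mixed_diffs_vanish
  then show "separable_args S n K f"
    using assms unfolding mixed_diff_def[symmetric]
    by (intro separable_args_if_mixed_diff_eq_0) blast+
qed

end
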